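(* Let $\mathbf{X}\subseteq\mathbb{N}^d$ and $\mathbf{L}=\mathbf{B}+\mathbb{N}(\mathbf{F})$ hybridlinear with $\mathbf{X}\trianglelefteq\mathbf{L}$, and let $\mathbf{S}\subseteq\mathbb{N}^d$ be semilinear with $\mathbf{X}\subseteq\mathbf{S}$. Then there exists $\mathbf{p}\in\mathbb{N}(\mathbf{F})$ such that $\mathbf{p}+\mathbf{L}\subseteq\mathbf{S}$.
   Context: $\mathbb{N}(\mathbf{F})$ is the set of finite $\mathbb{N}$-linear combinations of $\mathbf{F}$; for finite $\mathbf{F}$, $\mathbb{N}_{\ge1}(\mathbf{F})=\{\sum_{\mathbf{f}\in\mathbf{F}}\lambda_{\mathbf{f}}\mathbf{f}\mid\lambda_{\mathbf{f}}\ge1\}$. Hybridlinear: $\mathbf{B}+\mathbb{N}(\mathbf{F})$ with $\mathbf{B},\mathbf{F}\subseteq\mathbb{N}^d$ finite; semilinear: finite union of hybridlinear sets. $\mathbf{X}\trianglelefteq\mathbf{L}$ (asymptotic overapproximation) means $\mathbf{X}\subseteq\mathbf{L}$ and for every $\mathbf{x}\in\mathbf{L}$ and $\mathbf{w}\in\mathbb{N}_{\ge1}(\mathbf{F})$ there is $N\in\mathbb{N}$ with $\mathbf{x}+\mathbb{N}_{\ge N}\mathbf{w}\subseteq\mathbf{X}$. *)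

theory Defs
  imports "HOL-Analysis.Analysis"
begin

definition vsmul :: "nat \<Rightarrow> nat ^ 'd \<Rightarrow> nat ^ 'd" where
  "vsmul n v = (\<chi> i. n * v $ i)"

definition nat_comb :: "(nat ^ 'd) set \<Rightarrow> (nat ^ 'd) set" where
  "nat_comb F = {\<Sum>f\<in>G. vsmul (c f) f | G c. finite G \<and> G \<subseteq> F}"

definition nat_comb_ge1 :: "(nat ^ 'd) set \<Rightarrow> (nat ^ 'd) set" where
  "nat_comb_ge1 F = {\<Sum>f\<in>F. vsmul (c f) f | c. \<forall>f\<in>F. c f \<ge> 1}"

definition hybridlinear_set :: "(nat ^ 'd) set \<Rightarrow> (nat ^ 'd) set \<Rightarrow> (nat ^ 'd) set" where
  "hybridlinear_set B F = {b + p | b p. b \<in> B \<and> p \<in> nat_comb F}"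

definition hybridlinear :: "(nat ^ 'd) set \<Rightarrow> bool" where
  "hybridlinear L \<longleftrightarrow> (\<exists>B F. finite B \<and> finite F \<and> L = hybridlinear_set B F)"

definition semilinear :: "(nat ^ 'd) set \<Rightarrow> bool" where
  "semilinear S \<longleftrightarrow> (\<exists>\<L>. finite \<L> \<and> (\<forall>L\<in>\<L>. hybridlinear L) \<and> S = \<Union>\<L>)"

text \<open>\<open>X \<unlhd> L\<close> where \<open>L = B + \<nat>(F)\<close> (depends on the presentation via \<open>F\<close>).\<close>
definition asymp_overapprox :: "(nat ^ 'd) set \<Rightarrow> (nat ^ 'd) set \<Rightarrow> (nat ^ 'd) set \<Rightarrow> bool" where
  "asymp_overapprox X B F \<longleftrightarrow>
     X \<subseteq> hybridlinear_set B F \<and>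
     (\<forall>x\<in>hybridlinear_set B F. \<forall>w\<in>nat_comb_ge1 F.
        \<exists>N::nat. \<forall>n\<ge>N. x + vsmul n w \<in> X)"

end

theory Submission
  imports Defs "HOL-Decision_Procs.Cooper" "HOL-Library.Infinite_Set"
begin

(* Fix a base point b of L = B + \<nat>(F) and list F as f_1, ..., f_k. If no translate of
   b + \<nat>(F) lies in S, then the coefficient vectors x \<in> \<nat>^k with b + \<Sum> x_i f_i \<notin> S are
   cofinal in \<nat>^k, so they contain a sequence s_0 < s_1 < ... that increases strictly in every
   coordinate. By Cooper's quantifier elimination this set of vectors is defined by a
   quantifier-free Presburger formula. Every atom of such a formula is periodic in its linear
   term far out in both directions, so after passing to a subsequence (monotone, with constant
   residues) the truth value of the formula is the same at every point s_i + n (s_j - s_i),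
   i < j. Hence the whole ray from s_0 through s_1 stays outside S; but its direction lies in
   \<nat>_{\<ge>1}(F), so X \<unlhd> L puts its far points into X \<subseteq> S. Translates obtained for the
   finitely many base points are finally added up. *)

hide_const (open) T F E A C

lemma finite_range_constant_subseq:
  fixes a :: "nat \<Rightarrow> 'b"
  assumes "finite (range a)"
  shows "\<exists>r::nat \<Rightarrow> nat. strict_mono r \<and> (\<forall>i. a (r i) = a (r 0))"
proof -
  obtain y where "infinite (a -` {y})" using inf_img_fin_dom[OF assms] by blast
  then obtain r :: "nat \<Rightarrow> nat" where "strict_mono r" "\<forall>n. r n \<in> a -` {y}"
    using infinite_enumerate by blast
  thus ?thesis by auto
qed

lemma incseq_int_unbounded:
  fixes c :: "nat \<Rightarrow> int"
  assumes "incseq c" "infinite (range c)"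
  shows "\<exists>I. M \<le> c I"
proof (rule ccontr)
  assume "\<not> ?thesis"
  hence "range c \<subseteq> {c 0..M}" using \<open>incseq c\<close> by (auto simp: incseq_def not_le less_imp_le)
  thus False using assms(2) finite_subset by blast
qed

lemma int_subseq_monotone_congruent:
  fixes a :: "nat \<Rightarrow> int"
  assumes "d > 0"
  shows "\<exists>r::nat \<Rightarrow> nat. strict_mono r \<and> monoseq (\<lambda>i. a (r i)) \<and> (\<forall>i j. d dvd a (r j) - a (r i))"
proof -
  have "range (\<lambda>i. a i mod d) \<subseteq> {0..<d}" using assms by auto
  then obtain r1 :: "nat \<Rightarrow> nat" where r1: "strict_mono r1" "\<forall>i. a (r1 i) mod d = a (r1 0) mod d"
    using finite_range_constant_subseq[of "\<lambda>i. a i mod d"] finite_subset by blast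
  obtain r2 :: "nat \<Rightarrow> nat" where r2: "strict_mono r2" "monoseq (\<lambda>i. a (r1 (r2 i)))"
    using seq_monosub[of "\<lambda>i. a (r1 i)"] by blast
  have "a (r1 (r2 j)) mod d = a (r1 (r2 i)) mod d" for i j
    using r1(2) by metis
  hence "d dvd a (r1 (r2 j)) - a (r1 (r2 i))" for i j by (simp add: mod_eq_dvd_iff)
  moreover have "strict_mono (r1 \<circ> r2)" using r1(1) r2(1) by (simp add: strict_mono_def)
  ultimately show ?thesis using r2(2) by (intro exI[of _ "r1 \<circ> r2"]) simp
qed

definition regular_beyond :: "int \<Rightarrow> int \<Rightarrow> (nat \<Rightarrow> int) \<Rightarrow> bool" where
  "regular_beyond M d b \<longleftrightarrow>
     (\<forall>i. b i = b 0) \<or>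
     (\<forall>i j. i \<le> j \<longrightarrow> M \<le> b i \<and> b i \<le> b j \<and> d dvd b j - b i) \<or>
     (\<forall>i j. i \<le> j \<longrightarrow> b i \<le> -M \<and> b j \<le> b i \<and> d dvd b i - b j)"

lemma int_subseq_regular_beyond:
  fixes a :: "nat \<Rightarrow> int"
  assumes "d > 0"
  shows "\<exists>r::nat \<Rightarrow> nat. strict_mono r \<and> regular_beyond M d (a \<circ> r)"
proof -
  obtain r :: "nat \<Rightarrow> nat" where r: "strict_mono r" "monoseq (\<lambda>i. a (r i))"
    and dvd: "\<forall>i j. d dvd a (r j) - a (r i)"
    using int_subseq_monotone_congruent[OF assms] by blast
  define c where "c i = a (r i)" for i
  have shift: "strict_mono (\<lambda>i. r (i + I))" for I using r(1) by (simp add: strict_mono_def)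
  consider "finite (range c)" | "incseq c" "infinite (range c)" | "decseq c" "infinite (range c)"
    using r(2) unfolding c_def monoseq_iff by blast
  thus ?thesis
  proof cases
    case 1
    then obtain r' :: "nat \<Rightarrow> nat" where "strict_mono r'" "\<forall>i. c (r' i) = c (r' 0)"
      using finite_range_constant_subseq by blast
    thus ?thesis using r(1)
      by (intro exI[of _ "r \<circ> r'"]) (auto simp: c_def strict_mono_def regular_beyond_def)
  next
    case 2
    then obtain I where "M \<le> c I" using incseq_int_unbounded by blast
    moreover have "c I \<le> c (i + I)" "c (i + I) \<le> c (j + I)" if "i \<le> j" for i j
      using \<open>incseq c\<close> that by (simp_all add: incseq_def)
    ultimately have "regular_beyond M d (\<lambda>i. c (i + I))"
      using dvd unfolding regular_beyond_def c_def by (meson order_trans)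
    thus ?thesis using shift by (intro exI[of _ "\<lambda>i. r (i + I)"]) (simp add: c_def comp_def)
  next
    case 3
    have "incseq (\<lambda>i. - c i)" using \<open>decseq c\<close> by (simp add: decseq_def incseq_def)
    moreover have "range c = uminus ` range (\<lambda>i. - c i)" by (simp add: image_image)
    hence "infinite (range (\<lambda>i. - c i))" using 3(2) by (metis finite_imageI)
    ultimately obtain I where "M \<le> - c I" using incseq_int_unbounded by blast
    moreover have "c (i + I) \<le> c I" "c (j + I) \<le> c (i + I)" if "i \<le> j" for i j
      using \<open>decseq c\<close> that by (simp_all add: decseq_def)
    ultimately have "regular_beyond M d (\<lambda>i. c (i + I))"
      using dvd unfolding regular_beyond_def c_def by (smt (verit))
    thus ?thesis using shift by (intro exI[of _ "\<lambda>i. r (i + I)"]) (simp add: c_def comp_def)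
  qed
qed

definition periodic_beyond :: "(int \<Rightarrow> bool) \<Rightarrow> int \<Rightarrow> int \<Rightarrow> bool" where
  "periodic_beyond P M d \<longleftrightarrow>
     d > 0 \<and> (\<forall>x\<ge>M. P (x + d) = P x) \<and> (\<forall>x\<le>-M. P (x - d) = P x)"

lemma periodic_beyond_above:
  assumes "periodic_beyond P M d" "M \<le> x" "x \<le> y" "d dvd y - x"
  shows "P y = P x"
proof -
  have d: "0 < d" and up: "\<And>z. M \<le> z \<Longrightarrow> P (z + d) = P z"
    using assms(1) by (simp_all add: periodic_beyond_def)
  obtain k where k: "y - x = d * k" using assms(4) by (elim dvdE)
  have "0 \<le> d * k" using k assms(3) by simp
  hence "0 \<le> k" using d by (simp add: zero_le_mult_iff)
  have "P (x + d * int n) = P x" for n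
  proof (induction n)
    case (Suc n)
    have "P (x + d * int (Suc n)) = P ((x + d * int n) + d)" by (simp add: algebra_simps)
    also have "\<dots> = P (x + d * int n)" using d assms(2) by (intro up) (simp add: add_increasing2)
    finally show ?case using Suc by simp
  qed simp
  moreover have "y = x + d * int (nat k)" using k \<open>0 \<le> k\<close> by simp
  ultimately show ?thesis by metis
qed

lemma periodic_beyond_uminus:
  assumes "periodic_beyond P M d"
  shows "periodic_beyond (\<lambda>x. P (- x)) M d"
proof -
  have d: "0 < d" and up: "\<And>z. M \<le> z \<Longrightarrow> P (z + d) = P z"
    and down: "\<And>z. z \<le> -M \<Longrightarrow> P (z - d) = P z"
    using assms by (simp_all add: periodic_beyond_def)
  have "P (- (x + d)) = P (- x)" if "M \<le> x" for x
  proof -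
    have "- (x + d) = - x - d" by simp
    thus ?thesis using down[of "- x"] that by simp
  qed
  moreover have "P (- (x - d)) = P (- x)" if "x \<le> - M" for x
  proof -
    have "- (x - d) = - x + d" by simp
    thus ?thesis using up[of "- x"] that by simp
  qed
  ultimately show ?thesis using d by (simp add: periodic_beyond_def)
qed

lemma periodic_beyond_Not: "periodic_beyond P M d \<Longrightarrow> periodic_beyond (\<lambda>x. \<not> P x) M d"
  by (simp add: periodic_beyond_def)

lemma periodic_beyond_dvd: "\<exists>M d. periodic_beyond (\<lambda>x. c dvd x) M d"
proof (cases "c = 0")
  case True thus ?thesis by (intro exI[of _ 1]) (simp add: periodic_beyond_def)
next
  case False
  have "c dvd \<bar>c\<bar>" by simp
  with False show ?thesis
    by (intro exI[of _ 0] exI[of _ "\<bar>c\<bar>"]) (simp add: periodic_beyond_def dvd_add_left_iff dvd_diff_left_iff)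
qed

lemma periodic_beyond_increasing_ray:
  fixes b :: "nat \<Rightarrow> int"
  assumes "periodic_beyond P M d" "\<forall>i j. i \<le> j \<longrightarrow> M \<le> b i \<and> b i \<le> b j \<and> d dvd b j - b i" "i < j"
  shows "P (b i + int n * (b j - b i)) = P (b 0)"
proof -
  have b: "M \<le> b 0" "b 0 \<le> b i" "b i \<le> b j" "d dvd b i - b 0" "d dvd b j - b i"
    using assms(2)[rule_format, of 0 i] assms(2)[rule_format, of i j] assms(3) by auto
  hence "P (b i + int n * (b j - b i)) = P (b i)"
    by (intro periodic_beyond_above[OF assms(1)]) simp_all
  also have "\<dots> = P (b 0)" using b by (intro periodic_beyond_above[OF assms(1)]) simp_all
  finally show ?thesis .
qed

lemma periodic_beyond_regular_ray:
  assumes "periodic_beyond P M d" "regular_beyond M d b" "i < j"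
  shows "P (b i + int n * (b j - b i)) = P (b 0)"
proof -
  consider (const) "\<forall>i. b i = b 0"
    | (up) "\<forall>i j. i \<le> j \<longrightarrow> M \<le> b i \<and> b i \<le> b j \<and> d dvd b j - b i"
    | (down) "\<forall>i j. i \<le> j \<longrightarrow> b i \<le> -M \<and> b j \<le> b i \<and> d dvd b i - b j"
    using assms(2) unfolding regular_beyond_def by blast
  thus ?thesis
  proof cases
    case const
    hence "b i = b 0" "b j = b 0" by simp_all
    thus ?thesis by simp
  next
    case up
    thus ?thesis using periodic_beyond_increasing_ray[OF assms(1) _ assms(3)] by blast
  next
    case down
    have "M \<le> - b i \<and> - b i \<le> - b j \<and> d dvd - b j - - b i" if "i \<le> j" for i j
    proof -
      have "b i \<le> -M" "b j \<le> b i" "d dvd b i - b j" using down that by auto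
      moreover have "- b j - - b i = b i - b j" by simp
      ultimately show ?thesis by simp
    qed
    hence "\<forall>i j. i \<le> j \<longrightarrow> M \<le> - b i \<and> - b i \<le> - b j \<and> d dvd - b j - - b i" by blast
    from periodic_beyond_increasing_ray[OF periodic_beyond_uminus[OF assms(1)] this assms(3), of n]
    show ?thesis by (simp add: algebra_simps)
  qed
qed

definition ray :: "int list \<Rightarrow> int list \<Rightarrow> nat \<Rightarrow> int list" where
  "ray x y n = map (\<lambda>j. x ! j + int n * (y ! j - x ! j)) [0..<length x]"

lemma ray_0 [simp]: "ray x y 0 = x"
  by (simp add: ray_def map_nth)

lemma nth_beyond_length: "length xs \<le> j \<Longrightarrow> xs ! j = [] ! (j - length xs)"
  by (induction xs arbitrary: j) (auto simp: nth_Cons split: nat.splits)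

text \<open>Variables beyond the length of the lists evaluate to the same junk value \<open>[] ! _\<close>
  in all three environments, so the identity holds for every term.\<close>
lemma Inum_ray:
  assumes "length x = length y"
  shows "Inum (ray x y n) t = Inum x t + int n * (Inum y t - Inum x t)"
proof -
  have nth: "ray x y n ! j = x ! j + int n * (y ! j - x ! j)" for j
  proof (cases "j < length x")
    case False
    thus ?thesis using nth_beyond_length[of "ray x y n" j] nth_beyond_length[of x j]
        nth_beyond_length[of y j] assms by (simp add: ray_def)
  qed (simp add: ray_def)
  show ?thesis by (induction t) (simp_all add: nth, simp_all add: algebra_simps)
qed

definition ray_constant :: "fm \<Rightarrow> (nat \<Rightarrow> int list) \<Rightarrow> bool \<Rightarrow> bool" where
  "ray_constant p e v \<longleftrightarrow> (\<forall>i j n. i < j \<longrightarrow> Ifm [] (ray (e i) (e j) n) p = v)"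

definition ray_stabilizable :: "nat \<Rightarrow> fm \<Rightarrow> bool" where
  "ray_stabilizable k p \<longleftrightarrow> (\<forall>e :: nat \<Rightarrow> int list. (\<forall>i. length (e i) = k) \<longrightarrow>
     (\<exists>r v. strict_mono r \<and> ray_constant p (e \<circ> r) v))"

lemma ray_constant_subseq: "ray_constant p e v \<Longrightarrow> strict_mono r \<Longrightarrow> ray_constant p (e \<circ> r) v"
  by (simp add: ray_constant_def strict_mono_def)

lemma ray_stabilizable_const:
  assumes "\<And>bs. Ifm [] bs p = c"
  shows "ray_stabilizable k p"
  unfolding ray_stabilizable_def ray_constant_def
  by (intro allI impI exI[of _ id] exI[of _ c]) (simp add: assms strict_mono_id)

lemma ray_stabilizable_binop:
  assumes "ray_stabilizable k p" "ray_stabilizable k q"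
    and "\<And>bs. Ifm [] bs R = h (Ifm [] bs p) (Ifm [] bs q)"
  shows "ray_stabilizable k R"
  unfolding ray_stabilizable_def
proof (intro allI impI)
  fix e :: "nat \<Rightarrow> int list" assume len: "\<forall>i. length (e i) = k"
  obtain r1 v1 where r1: "strict_mono r1" "ray_constant p (e \<circ> r1) v1"
    using assms(1) len unfolding ray_stabilizable_def by blast
  have "\<forall>i. length ((e \<circ> r1) i) = k" using len by simp
  then obtain r2 v2 where r2: "strict_mono r2" "ray_constant q (e \<circ> r1 \<circ> r2) v2"
    using assms(2) unfolding ray_stabilizable_def by blast
  have "ray_constant p (e \<circ> r1 \<circ> r2) v1" using ray_constant_subseq r1(2) r2(1) .
  hence "ray_constant R (e \<circ> (r1 \<circ> r2)) (h v1 v2)"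
    using r2(2) assms(3) by (simp add: ray_constant_def comp_assoc)
  moreover have "strict_mono (r1 \<circ> r2)" using r1(1) r2(1) by (simp add: strict_mono_def)
  ultimately show "\<exists>r v. strict_mono r \<and> ray_constant R (e \<circ> r) v" by blast
qed

lemma ray_stabilizable_atom:
  assumes p: "\<And>bs. Ifm [] bs p = P (Inum bs t)" and P: "periodic_beyond P M d"
  shows "ray_stabilizable k p"
  unfolding ray_stabilizable_def
proof (intro allI impI)
  fix e :: "nat \<Rightarrow> int list" assume len: "\<forall>i. length (e i) = k"
  obtain r :: "nat \<Rightarrow> nat" where r: "strict_mono r"
    and reg: "regular_beyond M d ((\<lambda>i. Inum (e i) t) \<circ> r)"
    using int_subseq_regular_beyond P unfolding periodic_beyond_def by blast
  have "ray_constant p (e \<circ> r) (P (Inum (e (r 0)) t))"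
    using periodic_beyond_regular_ray[OF P reg] unfolding ray_constant_def
    by (simp add: p Inum_ray len)
  thus "\<exists>r v. strict_mono r \<and> ray_constant p (e \<circ> r) v" using r by blast
qed

theorem qfree_ray_stabilizable: "qfree p \<Longrightarrow> ray_stabilizable k p"
proof (induction p)
  case (Dvd c t)
  obtain M d where per: "periodic_beyond (\<lambda>x. c dvd x) M d" using periodic_beyond_dvd by blast
  show ?case by (rule ray_stabilizable_atom[where t = t, OF _ per]) simp
next
  case (NDvd c t)
  obtain M d where per: "periodic_beyond (\<lambda>x. c dvd x) M d" using periodic_beyond_dvd by blast
  show ?case by (rule ray_stabilizable_atom[where t = t, OF _ periodic_beyond_Not[OF per]]) simp
next
  case (Not p)
  hence IH: "ray_stabilizable k p" by simp
  show ?case by (rule ray_stabilizable_binop[OF IH IH, where h = "\<lambda>x _. \<not> x"]) simp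
next
  case (And p q)
  hence "ray_stabilizable k p" "ray_stabilizable k q" by simp_all
  thus ?case by (rule ray_stabilizable_binop[where h = "(\<and>)"]) simp
next
  case (Or p q)
  hence "ray_stabilizable k p" "ray_stabilizable k q" by simp_all
  thus ?case by (rule ray_stabilizable_binop[where h = "(\<or>)"]) simp
next
  case (Imp p q)
  hence "ray_stabilizable k p" "ray_stabilizable k q" by simp_all
  thus ?case by (rule ray_stabilizable_binop[where h = "(\<longrightarrow>)"]) simp
next
  case (Iff p q)
  hence "ray_stabilizable k p" "ray_stabilizable k q" by simp_all
  thus ?case by (rule ray_stabilizable_binop[where h = "(=)"]) simp
next
  case (Lt t) show ?case by (rule ray_stabilizable_atom[where P = "\<lambda>x. x < 0" and M = 1 and d = 1])
    (simp_all add: periodic_beyond_def)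
next
  case (Le t) show ?case by (rule ray_stabilizable_atom[where P = "\<lambda>x. x \<le> 0" and M = 1 and d = 1])
    (simp_all add: periodic_beyond_def)
next
  case (Gt t) show ?case by (rule ray_stabilizable_atom[where P = "\<lambda>x. x > 0" and M = 1 and d = 1])
    (simp_all add: periodic_beyond_def)
next
  case (Ge t) show ?case by (rule ray_stabilizable_atom[where P = "\<lambda>x. x \<ge> 0" and M = 1 and d = 1])
    (simp_all add: periodic_beyond_def)
next
  case (Eq t) show ?case by (rule ray_stabilizable_atom[where P = "\<lambda>x. x = 0" and M = 1 and d = 1])
    (simp_all add: periodic_beyond_def)
next
  case (NEq t) show ?case by (rule ray_stabilizable_atom[where P = "\<lambda>x. x \<noteq> 0" and M = 1 and d = 1])
    (simp_all add: periodic_beyond_def)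
next
  case T show ?case by (rule ray_stabilizable_const[where c = True]) simp
next
  case F show ?case by (rule ray_stabilizable_const[where c = False]) simp
next
  case (Closed n) show ?case by (rule ray_stabilizable_const[where c = "[] ! n"]) simp
next
  case (NClosed n) show ?case by (rule ray_stabilizable_const[where c = "\<not> [] ! n"]) simp
qed simp_all

lemma qfree_increasing_chain_ray:
  assumes "qfree p"
    and len: "\<And>n. length (s n) = k" and sat: "\<And>n. Ifm [] (map int (s n)) p"
    and inc: "\<And>n t. t < k \<Longrightarrow> s n ! t < s (Suc n) ! t"
  shows "\<exists>x \<mu>. length x = k \<and> length \<mu> = k \<and> (\<forall>t<k. 1 \<le> \<mu> ! t) \<and>
           (\<forall>n. Ifm [] (map int (map (\<lambda>t. x ! t + n * \<mu> ! t) [0..<k])) p)"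
proof -
  define e where "e n = map int (s n)" for n
  have "\<forall>n. length (e n) = k" using len by (simp add: e_def)
  then obtain r v where r: "strict_mono r" "ray_constant p (e \<circ> r) v"
    using qfree_ray_stabilizable[OF assms(1)] unfolding ray_stabilizable_def by blast
  define x where "x = s (r 0)"
  define y where "y = s (r 1)"
  define \<mu> where "\<mu> = map (\<lambda>t. y ! t - x ! t) [0..<k]"
  have xy: "x ! t < y ! t" if "t < k" for t
    using lift_Suc_mono_less[of "\<lambda>n. s n ! t", OF inc[OF that]] r(1)
    unfolding x_def y_def strict_mono_def by simp
  have "e (r 0) = map int x" "e (r 1) = map int y" "length x = k" "length y = k"
    by (simp_all add: e_def x_def y_def len)
  hence ray: "ray (e (r 0)) (e (r 1)) n = map int (map (\<lambda>t. x ! t + n * \<mu> ! t) [0..<k])" for n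
    using xy by (intro nth_equalityI) (auto simp: ray_def \<mu>_def of_nat_diff less_imp_le)
  have on_ray: "Ifm [] (ray (e (r 0)) (e (r 1)) n) p = v" for n
    using r(2) unfolding ray_constant_def by simp
  have "v" using on_ray[of 0] sat[of "r 0"] by (simp add: e_def)
  hence "Ifm [] (map int (map (\<lambda>t. x ! t + n * \<mu> ! t) [0..<k])) p" for n
    using on_ray[of n] ray[of n] by simp
  moreover have "length x = k" "length \<mu> = k" "\<forall>t<k. 1 \<le> \<mu> ! t"
    using xy by (simp_all add: x_def len \<mu>_def Suc_le_eq)
  ultimately show ?thesis by blast
qed

definition list_comb :: "(nat ^ 'd) list \<Rightarrow> nat list \<Rightarrow> nat ^ 'd" where
  "list_comb fs \<nu> = (\<Sum>i<length fs. vsmul (\<nu> ! i) (fs ! i))"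

lemma vsmul_component [simp]: "vsmul n v $ t = n * v $ t"
  by (simp add: vsmul_def)

lemma list_comb_component: "list_comb fs \<nu> $ t = (\<Sum>i<length fs. \<nu> ! i * fs ! i $ t)"
  by (simp add: list_comb_def sum_component)

lemma list_comb_affine:
  "list_comb fs (map (\<lambda>i. x ! i + n * \<mu> ! i) [0..<length fs]) = list_comb fs x + vsmul n (list_comb fs \<mu>)"
  by (simp add: vec_eq_iff list_comb_component sum.distrib sum_distrib_left algebra_simps)

lemma list_comb_add:
  "list_comb fs (map (\<lambda>i. x ! i + y ! i) [0..<length fs]) = list_comb fs x + list_comb fs y"
  using list_comb_affine[of fs x 1 y] by (simp add: vsmul_def vec_eq_iff)

lemma list_comb_eq_sum_set:
  assumes "distinct gs" "length \<nu> = length gs"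
  shows "list_comb gs \<nu> = (\<Sum>f\<in>set gs. vsmul (the (map_of (zip gs \<nu>) f)) f)"
proof -
  have "inj_on (nth gs) {..<length gs}" using assms(1) by (intro inj_on_nth) auto
  moreover have "set gs = nth gs ` {..<length gs}" by (auto simp: in_set_conv_nth)
  ultimately have "(\<Sum>f\<in>set gs. vsmul (the (map_of (zip gs \<nu>) f)) f)
      = (\<Sum>i<length gs. vsmul (the (map_of (zip gs \<nu>) (gs ! i))) (gs ! i))"
    by (simp add: sum.reindex)
  also have "\<dots> = list_comb gs \<nu>"
    unfolding list_comb_def using assms by (intro sum.cong) (simp_all add: map_of_zip_nth)
  finally show ?thesis by simp
qed

lemma nat_comb_list:
  assumes "distinct gs"
  shows "nat_comb (set gs) = {list_comb gs \<nu> | \<nu>. length \<nu> = length gs}"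
proof (intro set_eqI iffI)
  fix y assume "y \<in> nat_comb (set gs)"
  then obtain G c where y: "y = (\<Sum>f\<in>G. vsmul (c f) f)" and G: "G \<subseteq> set gs"
    unfolding nat_comb_def by blast
  define c' where "c' f = (if f \<in> G then c f else 0)" for f
  have "y = (\<Sum>f\<in>set gs. vsmul (c' f) f)"
    unfolding y using G by (intro sum.mono_neutral_cong_left) (auto simp: c'_def vec_eq_iff)
  also have "\<dots> = (\<Sum>f\<in>set gs. vsmul (the (map_of (zip gs (map c' gs)) f)) f)"
    using assms by (intro sum.cong) (auto simp: in_set_conv_nth map_of_zip_nth)
  also have "\<dots> = list_comb gs (map c' gs)"
    by (rule list_comb_eq_sum_set[OF assms, symmetric]) simp
  finally show "y \<in> {list_comb gs \<nu> | \<nu>. length \<nu> = length gs}" by force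
next
  fix y assume "y \<in> {list_comb gs \<nu> | \<nu>. length \<nu> = length gs}"
  then obtain \<nu> where "y = list_comb gs \<nu>" "length \<nu> = length gs" by blast
  thus "y \<in> nat_comb (set gs)" using list_comb_eq_sum_set[OF assms]
    by (auto simp: nat_comb_def intro!: exI[of _ "set gs"] exI[of _ "\<lambda>f. the (map_of (zip gs \<nu>) f)"])
qed

lemma list_comb_in_nat_comb_ge1:
  assumes "distinct gs" "length \<mu> = length gs" "\<forall>i<length gs. 1 \<le> \<mu> ! i"
  shows "list_comb gs \<mu> \<in> nat_comb_ge1 (set gs)"
proof -
  have "1 \<le> the (map_of (zip gs \<mu>) f)" if "f \<in> set gs" for f
    using that assms by (auto simp: in_set_conv_nth map_of_zip_nth)
  thus ?thesis using list_comb_eq_sum_set[OF assms(1,2)]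
    by (auto simp: nat_comb_ge1_def intro!: exI[of _ "\<lambda>f. the (map_of (zip gs \<mu>) f)"])
qed

lemma nat_comb_add:
  assumes "finite F" "x \<in> nat_comb F" "y \<in> nat_comb F"
  shows "x + y \<in> nat_comb F"
proof -
  obtain fs where fs: "set fs = F" "distinct fs" using finite_distinct_list[OF assms(1)] by blast
  note comb = nat_comb_list[OF fs(2), unfolded fs(1)]
  obtain a c where "x = list_comb fs a" "y = list_comb fs c"
    using assms(2,3) comb by auto
  hence "x + y = list_comb fs (map (\<lambda>i. a ! i + c ! i) [0..<length fs])" by (simp add: list_comb_add)
  thus ?thesis using comb by auto
qed

lemma nat_comb_sum:
  assumes "finite F" "\<And>a. a \<in> A \<Longrightarrow> f a \<in> nat_comb F"
  shows "sum f A \<in> nat_comb F"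
  using assms(2)
proof (induction A rule: infinite_finite_induct)
  case (infinite A)
  show ?case unfolding nat_comb_def by (rule CollectI, rule exI[of _ "{}"]) (simp add: infinite)
next
  case empty
  show ?case unfolding nat_comb_def by (rule CollectI, rule exI[of _ "{}"]) simp
next
  case (insert a A) thus ?case using nat_comb_add[OF assms(1)] by simp
qed

fun lin_num :: "nat \<Rightarrow> int list \<Rightarrow> int \<Rightarrow> num" where
  "lin_num off [] c = num.C c"
| "lin_num off (a # as) c = CN off a (lin_num (Suc off) as c)"

lemma Inum_lin_num: "Inum bs (lin_num off cs c) = (\<Sum>i<length cs. cs ! i * bs ! (off + i)) + c"
  by (induction cs arbitrary: off) (simp_all add: sum.lessThan_Suc_shift del: sum.lessThan_Suc)

definition fm_conj :: "('a \<Rightarrow> fm) \<Rightarrow> 'a list \<Rightarrow> fm" where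
  "fm_conj f xs = foldr (\<lambda>x p. And (f x) p) xs fm.T"

lemma Ifm_fm_conj: "Ifm bbs bs (fm_conj f xs) \<longleftrightarrow> (\<forall>x\<in>set xs. Ifm bbs bs (f x))"
  by (induction xs) (simp_all add: fm_conj_def)

definition fm_exists_list :: "nat \<Rightarrow> fm \<Rightarrow> fm" where
  "fm_exists_list m p = (fm.E ^^ m) p"

lemma Ifm_fm_exists_list:
  "Ifm bbs bs (fm_exists_list m p) \<longleftrightarrow> (\<exists>ys. length ys = m \<and> Ifm bbs (ys @ bs) p)"
proof (induction m arbitrary: p)
  case (Suc m)
  have "Ifm bbs bs (fm_exists_list (Suc m) p) \<longleftrightarrow> Ifm bbs bs (fm_exists_list m (fm.E p))"
    by (simp add: fm_exists_list_def funpow_Suc_right del: funpow.simps)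
  also have "\<dots> \<longleftrightarrow> (\<exists>ys x. length ys = m \<and> Ifm bbs (x # ys @ bs) p)" using Suc by simp
  also have "\<dots> \<longleftrightarrow> (\<exists>zs. length zs = Suc m \<and> Ifm bbs (zs @ bs) p)"
    by (metis Cons_eq_appendI length_Suc_conv)
  finally show ?case .
qed (simp add: fm_exists_list_def)

lemma ex_nonneg_int_list:
  "(\<exists>ys. length ys = m \<and> (\<forall>l<m. 0 \<le> ys ! l) \<and> R ys) \<longleftrightarrow> (\<exists>\<nu>. length \<nu> = m \<and> R (map int \<nu>))"
proof
  assume "\<exists>ys. length ys = m \<and> (\<forall>l<m. 0 \<le> ys ! l) \<and> R ys"
  then obtain ys where ys: "length ys = m" "\<forall>l<m. 0 \<le> ys ! l" "R ys" by blast
  hence "map int (map nat ys) = ys" by (intro nth_equalityI) simp_all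
  thus "\<exists>\<nu>. length \<nu> = m \<and> R (map int \<nu>)" using ys by (metis length_map)
qed force

lemma int_affine_list_comb_component:
  "int ((b + list_comb fs x) $ t) = (\<Sum>i<length fs. int (fs ! i $ t) * int (x ! i)) + int (b $ t)"
  by (simp add: list_comb_component of_nat_sum algebra_simps)

definition coord_eq_fm :: "(nat ^ 'd) list \<Rightarrow> (nat ^ 'd) list \<Rightarrow> nat ^ 'd \<Rightarrow> nat ^ 'd \<Rightarrow> 'd \<Rightarrow> fm" where
  "coord_eq_fm fs gs b c t = Eq (Add (lin_num 0 (map (\<lambda>g. int (g $ t)) gs) 0)
       (lin_num (length gs) (map (\<lambda>f. - int (f $ t)) fs) (int (c $ t) - int (b $ t))))"

lemma Ifm_coord_eq_fm:
  assumes "length \<nu> = length gs" "length x = length fs"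
  shows "Ifm bbs (map int \<nu> @ map int x) (coord_eq_fm fs gs b c t) \<longleftrightarrow>
    (b + list_comb fs x) $ t = (c + list_comb gs \<nu>) $ t"
proof -
  let ?bs = "map int \<nu> @ map int x"
  have "(\<Sum>i<length (map (\<lambda>g. int (g $ t)) gs). map (\<lambda>g. int (g $ t)) gs ! i * ?bs ! (0 + i))
      = (\<Sum>i<length gs. int (gs ! i $ t) * int (\<nu> ! i))"
    by (intro sum.cong) (auto simp: nth_append assms)
  moreover have "(\<Sum>i<length (map (\<lambda>f. - int (f $ t)) fs).
        map (\<lambda>f. - int (f $ t)) fs ! i * ?bs ! (length gs + i))
      = - (\<Sum>i<length fs. int (fs ! i $ t) * int (x ! i))"
    unfolding sum_negf[symmetric] by (intro sum.cong) (auto simp: nth_append assms)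
  moreover have "(b + list_comb fs x) $ t = (c + list_comb gs \<nu>) $ t \<longleftrightarrow>
      int ((b + list_comb fs x) $ t) = int ((c + list_comb gs \<nu>) $ t)"
    by (simp only: of_nat_eq_iff)
  ultimately show ?thesis
    unfolding coord_eq_fm_def Ifm.simps Inum.simps Inum_lin_num int_affine_list_comb_component
    by arith
qed

definition affine_image :: "nat ^ 'd \<Rightarrow> (nat ^ 'd) list \<Rightarrow> (nat ^ 'd) set" where
  "affine_image c gs = {c + list_comb gs \<nu> | \<nu>. length \<nu> = length gs}"

text \<open>The variables \<open>0..<length gs\<close> are the coefficients \<open>\<nu>\<close>, the following ones are \<open>x\<close>;
  \<open>ts\<close> must enumerate the coordinates.\<close>
definition affine_image_member_fm ::
    "(nat ^ 'd) list \<Rightarrow> 'd list \<Rightarrow> nat ^ 'd \<Rightarrow> nat ^ 'd \<Rightarrow> (nat ^ 'd) list \<Rightarrow> fm" where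
  "affine_image_member_fm fs ts b c gs = fm_exists_list (length gs)
     (And (fm_conj (\<lambda>l. Ge (Bound l)) [0..<length gs]) (fm_conj (coord_eq_fm fs gs b c) ts))"

lemma Ifm_affine_image_member_fm:
  assumes "set ts = UNIV" "length x = length fs"
  shows "Ifm bbs (map int x) (affine_image_member_fm fs ts b c gs) \<longleftrightarrow> b + list_comb fs x \<in> affine_image c gs"
proof -
  have "Ifm bbs (map int x) (affine_image_member_fm fs ts b c gs) \<longleftrightarrow>
      (\<exists>ys. length ys = length gs \<and> (\<forall>l<length gs. 0 \<le> ys ! l) \<and>
        (\<forall>t. Ifm bbs (ys @ map int x) (coord_eq_fm fs gs b c t)))"
    using assms(1) by (auto simp: affine_image_member_fm_def Ifm_fm_exists_list Ifm_fm_conj nth_append)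
  also have "\<dots> \<longleftrightarrow> (\<exists>\<nu>. length \<nu> = length gs \<and> (\<forall>t. Ifm bbs (map int \<nu> @ map int x) (coord_eq_fm fs gs b c t)))"
    by (rule ex_nonneg_int_list)
  also have "\<dots> \<longleftrightarrow> b + list_comb fs x \<in> affine_image c gs"
    using assms(2) by (auto simp: Ifm_coord_eq_fm affine_image_def vec_eq_iff)
  finally show ?thesis .
qed

lemma hybridlinear_as_affine_images:
  assumes "hybridlinear L"
  shows "\<exists>P. L = (\<Union>(c, gs)\<in>set P. affine_image c gs)"
proof -
  obtain B F where fin: "finite B" "finite F" and L: "L = hybridlinear_set B F"
    using assms unfolding hybridlinear_def by blast
  obtain gs where gs: "set gs = F" "distinct gs" using finite_distinct_list[OF fin(2)] by blast
  obtain bs where bs: "set bs = B" using finite_list[OF fin(1)] by blast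
  have "L = (\<Union>(c, gs)\<in>set (map (\<lambda>c. (c, gs)) bs). affine_image c gs)"
    using nat_comb_list[OF gs(2)]
    unfolding L hybridlinear_set_def affine_image_def gs(1)[symmetric] bs[symmetric] by auto
  thus ?thesis by (rule exI)
qed

lemma semilinear_as_affine_images:
  assumes "semilinear S"
  shows "\<exists>P. S = (\<Union>(c, gs)\<in>set P. affine_image c gs)"
proof -
  obtain \<L> where L: "finite \<L>" "\<forall>L\<in>\<L>. hybridlinear L" "S = \<Union>\<L>"
    using assms unfolding semilinear_def by blast
  obtain Ls where Ls: "set Ls = \<L>" using finite_list[OF L(1)] by blast
  have "\<forall>L\<in>set Ls. \<exists>P. L = (\<Union>(c, gs)\<in>set P. affine_image c gs)"
    unfolding Ls using L(2) hybridlinear_as_affine_images by blast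
  from bchoice[OF this] obtain f
    where f: "\<forall>L\<in>set Ls. L = (\<Union>(c, gs)\<in>set (f L). affine_image c gs)" by blast
  have "(\<Union>(c, gs)\<in>set (concat (map f Ls)). affine_image c gs)
      = (\<Union>L\<in>set Ls. \<Union>(c, gs)\<in>set (f L). affine_image c gs)" by auto
  also have "\<dots> = S" using f Ls L(3) by simp
  finally show ?thesis by (intro exI[of _ "concat (map f Ls)"]) simp
qed

lemma semilinear_complement_qfree_definable:
  fixes fs :: "(nat ^ 'd) list"
  assumes "semilinear S"
  shows "\<exists>\<psi>. qfree \<psi> \<and>
    (\<forall>x. length x = length fs \<longrightarrow> (Ifm [] (map int x) \<psi> \<longleftrightarrow> b + list_comb fs x \<notin> S))"
proof -
  obtain P where P: "S = (\<Union>(c, gs)\<in>set P. affine_image c gs)"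
    using semilinear_as_affine_images[OF assms] by blast
  obtain ts :: "'d list" where ts: "set ts = UNIV" using finite_list[of "UNIV :: 'd set"] by auto
  define \<phi> where "\<phi> = Not (evaldjf (\<lambda>(c, gs). affine_image_member_fm fs ts b c gs) P)"
  have "Ifm [] (map int x) (pa \<phi>) \<longleftrightarrow> b + list_comb fs x \<notin> S" if "length x = length fs" for x
    using Ifm_affine_image_member_fm[OF ts that] unfolding \<phi>_def P
    by (auto simp: mirqe evaldjf_ex split: prod.splits)
  thus ?thesis using mirqe by blast
qed

lemma strictly_increasing_chain:
  fixes Q :: "nat list \<Rightarrow> bool"
  assumes "\<And>\<pi>. length \<pi> = k \<Longrightarrow> \<exists>\<beta>. length \<beta> = k \<and> (\<forall>t<k. \<pi> ! t < \<beta> ! t) \<and> Q \<beta>"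
  shows "\<exists>s. \<forall>n. (length (s n) = k \<and> Q (s n)) \<and> (\<forall>t<k. s n ! t < s (Suc n) ! t)"
proof (rule dependent_nat_choice)
  show "\<exists>\<beta>. length \<beta> = k \<and> Q \<beta>" using assms[of "replicate k 0"] by auto
qed (use assms in blast)

lemma no_translate_cofinal:
  assumes "distinct fs" and no_translate: "\<forall>p\<in>nat_comb (set fs). \<exists>q\<in>nat_comb (set fs). b + p + q \<notin> S"
    and "length \<pi> = length fs"
  shows "\<exists>\<beta>. length \<beta> = length fs \<and> (\<forall>t<length fs. \<pi> ! t < \<beta> ! t) \<and> b + list_comb fs \<beta> \<notin> S"
proof -
  note comb = nat_comb_list[OF assms(1)]
  have "list_comb fs (map Suc \<pi>) \<in> nat_comb (set fs)" using comb assms(3) by auto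
  then obtain q where "q \<in> nat_comb (set fs)" "b + list_comb fs (map Suc \<pi>) + q \<notin> S"
    using no_translate by blast
  then obtain \<mu> where \<mu>: "b + list_comb fs (map Suc \<pi>) + list_comb fs \<mu> \<notin> S"
    using comb by auto
  define \<beta> where "\<beta> = map (\<lambda>i. map Suc \<pi> ! i + \<mu> ! i) [0..<length fs]"
  have "b + list_comb fs \<beta> \<notin> S"
    using \<mu> list_comb_add[of fs "map Suc \<pi>" \<mu>] by (simp add: \<beta>_def add.assoc)
  moreover have "length \<beta> = length fs" "\<forall>t<length fs. \<pi> ! t < \<beta> ! t"
    using assms(3) by (auto simp: \<beta>_def)
  ultimately show ?thesis by blast
qed

lemma translate_into_semilinear:
  assumes "finite F" "semilinear S"
    and rays: "\<And>x w. x \<in> nat_comb F \<Longrightarrow> w \<in> nat_comb_ge1 F \<Longrightarrow> \<exists>N. \<forall>n\<ge>N. b + x + vsmul n w \<in> S"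
  shows "\<exists>p\<in>nat_comb F. \<forall>q\<in>nat_comb F. b + p + q \<in> S"
proof (rule ccontr)
  obtain fs where fs: "set fs = F" "distinct fs" using finite_distinct_list[OF assms(1)] by blast
  define k where "k = length fs"
  obtain \<psi> where \<psi>: "qfree \<psi>"
    and bad: "\<And>x. length x = k \<Longrightarrow> Ifm [] (map int x) \<psi> \<longleftrightarrow> b + list_comb fs x \<notin> S"
    using semilinear_complement_qfree_definable[OF assms(2), of fs b] unfolding k_def by blast
  assume "\<not> ?thesis"
  hence "\<exists>\<beta>. length \<beta> = k \<and> (\<forall>t<k. \<pi> ! t < \<beta> ! t) \<and> Ifm [] (map int \<beta>) \<psi>"
    if "length \<pi> = k" for \<pi>
    using no_translate_cofinal[OF fs(2), of b S \<pi>] that bad unfolding fs(1) k_def by auto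
  from strictly_increasing_chain[OF this] obtain s
    where "\<forall>n. (length (s n) = k \<and> Ifm [] (map int (s n)) \<psi>) \<and> (\<forall>t<k. s n ! t < s (Suc n) ! t)"
    by blast
  then obtain x \<mu> where x\<mu>: "length x = k" "length \<mu> = k" "\<forall>t<k. 1 \<le> \<mu> ! t"
    and ray: "\<And>n. Ifm [] (map int (map (\<lambda>t. x ! t + n * \<mu> ! t) [0..<k])) \<psi>"
    using qfree_increasing_chain_ray[OF \<psi>, of s k] by blast
  have off_S: "b + list_comb fs x + vsmul n (list_comb fs \<mu>) \<notin> S" for n
    using bad[of "map (\<lambda>t. x ! t + n * \<mu> ! t) [0..<k]"] ray[of n] list_comb_affine[of fs x n \<mu>]
    by (simp add: k_def add.assoc)
  have "list_comb fs x \<in> nat_comb F" using nat_comb_list[OF fs(2)] fs(1) x\<mu>(1) k_def by auto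
  moreover have "list_comb fs \<mu> \<in> nat_comb_ge1 F"
    using list_comb_in_nat_comb_ge1[OF fs(2)] x\<mu>(2,3) fs(1) k_def by auto
  ultimately obtain N where "\<forall>n\<ge>N. b + list_comb fs x + vsmul n (list_comb fs \<mu>) \<in> S"
    using rays by blast
  thus False using off_S by blast
qed

lemma nat_comb_common_translate:
  assumes "finite B" "finite F" "\<And>b. b \<in> B \<Longrightarrow> \<exists>p\<in>nat_comb F. \<forall>q\<in>nat_comb F. b + p + q \<in> S"
  shows "\<exists>p\<in>nat_comb F. \<forall>b\<in>B. \<forall>q\<in>nat_comb F. b + p + q \<in> S"
proof -
  have "\<forall>b\<in>B. \<exists>p. p \<in> nat_comb F \<and> (\<forall>q\<in>nat_comb F. b + p + q \<in> S)" using assms(3) by blast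
  from bchoice[OF this] obtain p
    where p: "\<forall>b\<in>B. p b \<in> nat_comb F \<and> (\<forall>q\<in>nat_comb F. b + p b + q \<in> S)" by blast
  have "b + sum p B + q \<in> S" if "b \<in> B" "q \<in> nat_comb F" for b q
  proof -
    have "sum p B = p b + sum p (B - {b})" using sum.remove[OF assms(1) that(1)] .
    moreover have "sum p (B - {b}) \<in> nat_comb F" using p by (intro nat_comb_sum[OF assms(2)]) auto
    hence "sum p (B - {b}) + q \<in> nat_comb F" using that(2) by (rule nat_comb_add[OF assms(2)])
    ultimately show ?thesis using p that by (simp add: add.assoc)
  qed
  moreover have "sum p B \<in> nat_comb F" using p by (intro nat_comb_sum[OF assms(2)]) auto
  ultimately show ?thesis by blast
qed

theorem mainTheorem6:
  fixes X S B F :: "(nat ^ 'd) set"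
  assumes "finite B" and "finite F"
    and "asymp_overapprox X B F"
    and "semilinear S" and "X \<subseteq> S"
  shows "\<exists>p\<in>nat_comb F. {p + l | l. l \<in> hybridlinear_set B F} \<subseteq> S"
proof -
  have "\<exists>N. \<forall>n\<ge>N. b + x + vsmul n w \<in> S"
    if "b \<in> B" "x \<in> nat_comb F" "w \<in> nat_comb_ge1 F" for b x w
  proof -
    have "b + x \<in> hybridlinear_set B F" using that unfolding hybridlinear_set_def by blast
    thus ?thesis using assms(3,5) that(3) unfolding asymp_overapprox_def by blast
  qed
  then obtain p where p: "p \<in> nat_comb F" "\<forall>b\<in>B. \<forall>q\<in>nat_comb F. b + p + q \<in> S"
    using nat_comb_common_translate[OF assms(1,2) translate_into_semilinear[OF assms(2,4)]] by blast
  show ?thesis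
  proof (intro bexI[OF _ p(1)] subsetI)
    fix z assume "z \<in> {p + l | l. l \<in> hybridlinear_set B F}"
    then obtain b q where "b \<in> B" "q \<in> nat_comb F" "z = b + p + q"
      unfolding hybridlinear_set_def by (auto simp: ac_simps)
    thus "z \<in> S" using p(2) by blast
  qed
qed

end
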